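(* Let $V$ be a $2$-dimensional real vector space. For every $T\in\widetilde C_1$, the isotropy subgroup $\{g\in\mathrm{Gl}(V): g\cdot T=T\}$ has dimension at least $1$. Equivalently, on a $2$-dimensional manifold every $1$-jet at $x$ of a symmetric linear connection has an isotropy group of dimension at least $1$ for the action of $\mathrm{Diff}_x$ on $\widetilde{\mathfrak{C}}^1_2\cong\widetilde C_1/\mathrm{Gl}_2$.
   Context: $\widetilde C_1$ is the space of $(1,3)$-tensors $\Gamma^k_{ijl}$ on $V$ symmetric in $i,j$ whose symmetrization over the three covariant indices vanishes, with the standard tensorial action of $\mathrm{Gl}(V)$. (It corresponds to the space of first normal tensors $\Gamma^1_x$ of symmetric linear connections: in a normal chart $(\Gamma^1_x)^k_{ijl}=\partial_l\Gamma^k_{ij}(0)$.) $\mathrm{Diff}_x$ is the group of germs of diffeomorphisms fixing $x$, acting on connections by $(\tau\cdot\nabla)_D\bar D=\tau_*^{-1}(\nabla_{\tau_*D}\tau_*\bar D)$. *)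

theory Defs
  imports "HOL-Analysis.Analysis" "HOL-Library.Numeral_Type"
begin

text \<open>V = R^2 with basis indexed by the type 2. A (1,3)-tensor T^k_{ijl} is
  represented as T k i j l. Elements of Gl(V) are invertible matrices real^2^2,
  with g $ k $ a the (k,a) entry.\<close>

type_synonym tensor13 = "2 \<Rightarrow> 2 \<Rightarrow> 2 \<Rightarrow> 2 \<Rightarrow> real"

definition C1t :: "tensor13 set" where
  "C1t = {T. (\<forall>k i j l. T k i j l = T k j i l) \<and>
             (\<forall>k i j l. T k i j l + T k i l j + T k j i l + T k j l i + T k l i j + T k l j i = 0)}"

definition tens_act :: "real^2^2 \<Rightarrow> tensor13 \<Rightarrow> tensor13" where
  "tens_act g T = (\<lambda>k i j l. \<Sum>a\<in>UNIV. \<Sum>b\<in>UNIV. \<Sum>c\<in>UNIV. \<Sum>d\<in>UNIV.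
      g $ k $ a * T a b c d * matrix_inv g $ b $ i * matrix_inv g $ c $ j * matrix_inv g $ d $ l)"

definition isotropy :: "tensor13 \<Rightarrow> (real^2^2) set" where
  "isotropy T = {g. invertible g \<and> tens_act g T = T}"

text \<open>Lie algebra (tangent space at the identity) of a subgroup H of Gl(V):
  the velocities at 0 of curves in H through the identity.  The dimension of the
  (closed, Lie) subgroup H is the dimension of this space.\<close>
definition lie_algebra :: "(real^2^2) set \<Rightarrow> (real^2^2) set" where
  "lie_algebra H = {A. \<exists>\<gamma>. \<gamma> 0 = mat 1 \<and> (\<forall>t. \<gamma> t \<in> H) \<and> (\<gamma> has_vector_derivative A) (at 0)}"

definition group_dim :: "(real^2^2) set \<Rightarrow> nat" where
  "group_dim H = dim (lie_algebra H)"

end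

theory Submission
  imports Defs
begin

text \<open>
  Every tensor in the space is of the form T_A, built from an endomorphism A of V and an
  area form \<epsilon> as (T_A)^k_{ijl} = A^k_i \<epsilon>_{jl} + A^k_j \<epsilon>_{il}: T_A is symmetric in i, j, its
  total symmetrisation vanishes because \<epsilon> is skew, and both spaces have dimension 4.
  Since \<epsilon> only picks up the factor det g, every g of determinant 1 commuting with A fixes T_A.
  Writing A = \<tau> I + \<kappa> N with N traceless and nonzero, the unimodular elements x I + y N of the
  commutant of N form a one-parameter group, so a curve in it through the identity with velocity
  a multiple of N exhibits a nonzero tangent vector of the isotropy group.
\<close>

lemma matrix_inv_unique:
  fixes A B :: "'a::semiring_1^'n^'n"
  assumes "A ** B = mat 1" "B ** A = mat 1"
  shows "matrix_inv A = B"
proof -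
  have "\<exists>A'. A ** A' = mat 1 \<and> A' ** A = mat 1" using assms by blast
  then have inv: "A ** matrix_inv A = mat 1 \<and> matrix_inv A ** A = mat 1"
    unfolding matrix_inv_def by (rule someI_ex)
  have "matrix_inv A = matrix_inv A ** (A ** B)" using assms by (simp add: matrix_mul_rid)
  also have "\<dots> = (matrix_inv A ** A) ** B" by (simp add: matrix_mul_assoc)
  also have "\<dots> = B" using inv by (simp add: matrix_mul_lid)
  finally show ?thesis .
qed

lemma matrix_inv_2_unimodular:
  fixes g :: "real^2^2"
  assumes "det g = 1"
  shows "matrix_inv g = vector [vector [g$2$2, - g$1$2], vector [- g$2$1, g$1$1]]"
  using assms
  by (intro matrix_inv_unique)
     (auto simp: det_2 vec_eq_iff forall_2 matrix_matrix_mult_def sum_2 mat_def algebra_simps)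

lemma C1t_entries:
  assumes "T \<in> C1t"
  shows "T k 1 1 1 = 0" "T k 2 2 2 = 0"
    "T k 1 2 1 = - T k 1 1 2 / 2" "T k 2 1 1 = - T k 1 1 2 / 2"
    "T k 1 2 2 = - T k 2 2 1 / 2" "T k 2 1 2 = - T k 2 2 1 / 2"
proof -
  have sym: "\<And>k i j l. T k i j l = T k j i l"
    and cyc: "\<And>k i j l. T k i j l + T k i l j + T k j i l + T k j l i + T k l i j + T k l j i = 0"
    using assms unfolding C1t_def by auto
  show "T k 1 1 1 = 0" using cyc[of k 1 1 1] by simp
  show "T k 2 2 2 = 0" using cyc[of k 2 2 2] by simp
  show "T k 1 2 1 = - T k 1 1 2 / 2" "T k 2 1 1 = - T k 1 1 2 / 2"
    using cyc[of k 1 1 2] sym[of k 1 2 1] by simp_all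
  show "T k 1 2 2 = - T k 2 2 1 / 2" "T k 2 1 2 = - T k 2 2 1 / 2"
    using cyc[of k 2 2 1] sym[of k 1 2 2] by simp_all
qed

definition traceless_mat :: "real \<Rightarrow> real \<Rightarrow> real \<Rightarrow> real^2^2" where
  "traceless_mat n r u = vector [vector [n, r], vector [u, - n]]"

lemma det_commutant_traceless:
  "det (x *\<^sub>R mat 1 + y *\<^sub>R traceless_mat n r u) = x\<^sup>2 - y\<^sup>2 * (n\<^sup>2 + r * u)"
  by (simp add: det_2 traceless_mat_def mat_def power2_eq_square algebra_simps)

lemma tens_act_commutant_fixes:
  fixes T :: tensor13
  assumes T: "T \<in> C1t"
    and coeffs: "T 1 1 1 2 = -2 * (\<tau> + \<kappa> * n)" "T 1 2 2 1 = 2 * \<kappa> * r"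
      "T 2 1 1 2 = -2 * \<kappa> * u" "T 2 2 2 1 = 2 * (\<tau> - \<kappa> * n)"
    and g: "g = x *\<^sub>R mat 1 + y *\<^sub>R traceless_mat n r u"
    and unimodular: "det g = 1"
  shows "tens_act g T = T"
proof -
  let ?D = "(x + y*n) * (x - y*n) - (y*r) * (y*u)"
  have entries: "g$1$1 = x + y*n" "g$1$2 = y*r" "g$2$1 = y*u" "g$2$2 = x - y*n"
    by (simp_all add: g traceless_mat_def mat_def)
  have D: "?D = 1" using unimodular by (simp add: det_2 entries)
  \<comment> \<open>Substituting the adjugate for the inverse, each entry comes out as T times (det g)^2.\<close>
  have scale: "L = R * ?D\<^sup>2 \<Longrightarrow> L = R" for L R :: real by (simp add: D)
  have "\<forall>k i j l. tens_act g T k i j l = T k i j l"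
    unfolding tens_act_def matrix_inv_2_unimodular[OF unimodular] sum_2 forall_2
    by (simp_all only: C1t_entries[OF T] vector_2 entries coeffs) (intro conjI; rule scale; algebra)+
  then show ?thesis by (intro ext) blast
qed

lemma one_plus_small_square_pos:
  fixes s d :: real
  assumes "\<bar>s\<bar> \<le> 1 / (1 + \<bar>d\<bar>)"
  shows "0 < 1 + s\<^sup>2 * d"
proof -
  have "s\<^sup>2 \<le> (1 / (1 + \<bar>d\<bar>))\<^sup>2"
    using assms by (metis abs_ge_zero power2_abs power_mono)
  then have "s\<^sup>2 * \<bar>d\<bar> \<le> (1 / (1 + \<bar>d\<bar>))\<^sup>2 * \<bar>d\<bar>"
    by (rule mult_right_mono) simp
  also have "\<dots> = \<bar>d\<bar> / (1 + \<bar>d\<bar>)\<^sup>2"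
    by (simp add: power_divide)
  also have "\<dots> < 1"
  proof -
    have "\<bar>d\<bar> < 1 + \<bar>d\<bar>" by simp
    also have "\<dots> \<le> (1 + \<bar>d\<bar>)\<^sup>2" by (rule self_le_power) simp_all
    finally show ?thesis by (simp add: divide_less_eq)
  qed
  finally have "s\<^sup>2 * \<bar>d\<bar> < 1" .
  moreover have "s\<^sup>2 * (- d) \<le> s\<^sup>2 * \<bar>d\<bar>"
    by (intro mult_left_mono) auto
  ultimately show ?thesis by linarith
qed

lemma unimodular_curve_along_traceless:
  obtains \<gamma> :: "real \<Rightarrow> real^2^2" and c :: real
  where "\<gamma> 0 = mat 1"
    and "\<And>t. \<exists>x y. \<gamma> t = x *\<^sub>R mat 1 + y *\<^sub>R traceless_mat n r u \<and> det (\<gamma> t) = 1"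
    and "c > 0" and "(\<gamma> has_vector_derivative c *\<^sub>R traceless_mat n r u) (at 0)"
proof -
  let ?N = "traceless_mat n r u"
  define q where "q = n\<^sup>2 + r * u"
  define c where "c = 1 / (1 + \<bar>q\<bar>)"
  \<comment> \<open>The bounded parameter c sin t keeps det (I + c sin t N) positive for every t.\<close>
  define S where "S t = sqrt (1 - (c * sin t)\<^sup>2 * q)" for t
  define \<gamma> where "\<gamma> t = (1 / S t) *\<^sub>R mat 1 + (c * sin t / S t) *\<^sub>R ?N" for t
  have pos: "0 < 1 - (c * sin t)\<^sup>2 * q" for t
  proof -
    have "\<bar>c * sin t\<bar> \<le> 1 / (1 + \<bar>- q\<bar>)"
      using mult_left_le[OF abs_sin_le_one[of t], of c] by (simp add: c_def abs_mult)
    then show ?thesis using one_plus_small_square_pos by fastforce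
  qed
  have "det (\<gamma> t) = 1" for t
  proof -
    have "(S t)\<^sup>2 = 1 - (c * sin t)\<^sup>2 * q" using pos[of t] by (simp add: S_def)
    moreover have "S t > 0" using pos[of t] by (simp add: S_def)
    ultimately show ?thesis
      by (simp add: \<gamma>_def det_commutant_traceless q_def field_simps power2_eq_square)
  qed
  then have "\<exists>x y. \<gamma> t = x *\<^sub>R mat 1 + y *\<^sub>R ?N \<and> det (\<gamma> t) = 1" for t
    by (auto simp: \<gamma>_def)
  moreover have "(\<gamma> has_vector_derivative c *\<^sub>R ?N) (at 0)"
    unfolding \<gamma>_def S_def
    by (rule has_vector_derivative_eq_rhs, (rule derivative_eq_intros refl | simp)+)
  moreover have "\<gamma> 0 = mat 1" "c > 0" by (simp_all add: \<gamma>_def S_def c_def)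
  ultimately show ?thesis using that by blast
qed

text \<open>The four free coefficients of a tensor in the space are those of T_A for
  A = \<tau> I + \<kappa> traceless_mat n r u, with the area form normalised by \<epsilon>_{12} = -1.\<close>

lemma tensor_coeffs_decompose:
  fixes T :: tensor13
  obtains \<tau> \<kappa> n r u where "traceless_mat n r u \<noteq> 0"
    and "T 1 1 1 2 = -2 * (\<tau> + \<kappa> * n)" "T 1 2 2 1 = 2 * \<kappa> * r"
      "T 2 1 1 2 = -2 * \<kappa> * u" "T 2 2 2 1 = 2 * (\<tau> - \<kappa> * n)"
proof (cases "T 1 1 1 2 = - T 2 2 2 1 \<and> T 1 2 2 1 = 0 \<and> T 2 1 1 2 = 0")
  case True
  have "traceless_mat 1 0 0 \<noteq> 0" by (simp add: traceless_mat_def vec_eq_iff forall_2)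
  with True show ?thesis by (intro that[of 1 0 0 "T 2 2 2 1 / 2" 0]) auto
next
  case False
  let ?n = "(- T 1 1 1 2 - T 2 2 2 1) / 4" and ?r = "T 1 2 2 1 / 2" and ?u = "- T 2 1 1 2 / 2"
  have "traceless_mat ?n ?r ?u \<noteq> 0"
    using False by (auto simp: traceless_mat_def vec_eq_iff forall_2)
  then show ?thesis by (rule that[of _ _ _ "(T 2 2 2 1 - T 1 1 1 2) / 4" 1]) (simp_all add: field_simps)
qed

lemma group_dim_pos:
  assumes "A \<in> lie_algebra H" "A \<noteq> 0"
  shows "1 \<le> group_dim H"
proof -
  have "dim {A} \<le> dim (lie_algebra H)" using assms(1) by (intro dim_subset) simp
  then show ?thesis using assms(2) by (simp add: group_dim_def)
qed

theorem mainTheorem12: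
  assumes "T \<in> C1t"
  shows "group_dim (isotropy T) \<ge> 1"
proof -
  obtain \<tau> \<kappa> n r u where N: "traceless_mat n r u \<noteq> 0"
    and coeffs: "T 1 1 1 2 = -2 * (\<tau> + \<kappa> * n)" "T 1 2 2 1 = 2 * \<kappa> * r"
      "T 2 1 1 2 = -2 * \<kappa> * u" "T 2 2 2 1 = 2 * (\<tau> - \<kappa> * n)"
    by (rule tensor_coeffs_decompose)
  obtain \<gamma> c where \<gamma>0: "\<gamma> 0 = mat 1"
    and commutant: "\<And>t. \<exists>x y. \<gamma> t = x *\<^sub>R mat 1 + y *\<^sub>R traceless_mat n r u \<and> det (\<gamma> t) = 1"
    and c: "c > 0" and velocity: "(\<gamma> has_vector_derivative c *\<^sub>R traceless_mat n r u) (at 0)"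
    using unimodular_curve_along_traceless[of n r u] by blast
  have "\<gamma> t \<in> isotropy T" for t
    using commutant[of t] tens_act_commutant_fixes[OF assms coeffs]
    by (auto simp: isotropy_def invertible_det_nz)
  then have "c *\<^sub>R traceless_mat n r u \<in> lie_algebra (isotropy T)"
    unfolding lie_algebra_def using \<gamma>0 velocity by blast
  then show ?thesis by (rule group_dim_pos) (use N c in auto)
qed

end
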